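(* Let $V$ be a complex normed vector space and $A\subseteq V$ convex. Then $A$ is norm closed if and only if $A$ is s.a.-sequentially closed. In particular, a linear subspace of $V$ is norm closed if and only if it is s.a.-sequentially closed.
   Context: $l^{\infty}(V)$ is the space of bounded sequences $x=\{x_n\}_{n=1}^\infty$ in $V$ with norm $\|x\|_\infty=\sup_n\|x_n\|_V$. For $v\in V$, $\widetilde v=\{v,v,\dots\}$. $T$ is the left shift: $T\{x_1,x_2,\dots\}=\{x_2,x_3,\dots\}$. A Banach limit functional is a bounded linear functional $L$ on $l^\infty(V)$ with $\|L\|\le1$ and $L(Tx)=L(x)$ for all $x$. A sequence $x\in l^\infty(V)$ is strongly almost convergent to $v\in V$ if $L(x)=L(\widetilde v)$ for every Banach limit functional $L$. A set $A\subseteq V$ is s.a.-sequentially closed if whenever $\{x_n\}_{n=1}^\infty$ is a bounded sequence in $A$ that is strongly almost convergent to some $v\in V$, then $v\in A$. *)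

theory Defs
  imports "HOL-Analysis.Analysis"
begin

class complex_vector = real_vector +
  fixes scaleC :: "complex \<Rightarrow> 'a \<Rightarrow> 'a"  (infixr \<open>*\<^sub>C\<close> 75)
  assumes scaleC_add_right: "a *\<^sub>C (x + y) = a *\<^sub>C x + a *\<^sub>C y"
    and scaleC_add_left: "(a + b) *\<^sub>C x = a *\<^sub>C x + b *\<^sub>C x"
    and scaleC_scaleC: "a *\<^sub>C (b *\<^sub>C x) = (a * b) *\<^sub>C x"
    and scaleC_one: "1 *\<^sub>C x = x"
    and scaleR_scaleC: "r *\<^sub>R x = complex_of_real r *\<^sub>C x"

class complex_normed_vector = complex_vector + real_normed_vector +
  assumes norm_scaleC: "norm (a *\<^sub>C x) = cmod a * norm x"

definition csubspace :: "'a::complex_vector set \<Rightarrow> bool" where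
  "csubspace S \<longleftrightarrow> 0 \<in> S \<and> (\<forall>x\<in>S. \<forall>y\<in>S. x + y \<in> S) \<and> (\<forall>c. \<forall>x\<in>S. c *\<^sub>C x \<in> S)"

definition linf :: "(nat \<Rightarrow> 'a::real_normed_vector) \<Rightarrow> bool" where
  "linf x \<longleftrightarrow> bounded (range x)"

definition linf_norm :: "(nat \<Rightarrow> 'a::real_normed_vector) \<Rightarrow> real" where
  "linf_norm x = (SUP n. norm (x n))"

text \<open>Banach limit functional: a complex-linear functional on l-infinity(V) of norm at
most 1 that is invariant under the left shift. (Values of L outside l-infinity(V)
are irrelevant.)\<close>
definition banach_limit :: "((nat \<Rightarrow> 'a::complex_normed_vector) \<Rightarrow> complex) \<Rightarrow> bool" where
  "banach_limit L \<longleftrightarrow>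
     (\<forall>x y. linf x \<longrightarrow> linf y \<longrightarrow> L (\<lambda>n. x n + y n) = L x + L y) \<and>
     (\<forall>c x. linf x \<longrightarrow> L (\<lambda>n. c *\<^sub>C x n) = c * L x) \<and>
     (\<forall>x. linf x \<longrightarrow> cmod (L x) \<le> linf_norm x) \<and>
     (\<forall>x. linf x \<longrightarrow> L (\<lambda>n. x (Suc n)) = L x)"

definition strongly_almost_convergent :: "(nat \<Rightarrow> 'a::complex_normed_vector) \<Rightarrow> 'a \<Rightarrow> bool" where
  "strongly_almost_convergent x v \<longleftrightarrow>
     linf x \<and> (\<forall>L. banach_limit L \<longrightarrow> L x = L (\<lambda>n. v))"

definition sa_seq_closed :: "'a::complex_normed_vector set \<Rightarrow> bool" where
  "sa_seq_closed A \<longleftrightarrow>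
     (\<forall>x v. (\<forall>n. x n \<in> A) \<and> linf x \<and> strongly_almost_convergent x v \<longrightarrow> v \<in> A)"

end

theory Submission
  imports Defs
begin

(* If a bounded sequence x in A converges in norm to v, every Banach limit vanishes
   on the null sequence x - v, so x is strongly almost convergent to v; hence
   s.a.-sequential closedness implies closedness.  Conversely, let A be closed and
   convex, x a bounded sequence in A and v outside A, say ball v delta disjoint
   from A.  The functional
       q(y) = inf_N sup_k || (y_k + ... + y_(k+N-1)) || / N
   on bounded V-valued sequences is sublinear, kills differences y - Ty of shifted
   sequences, is bounded by the sup norm, and q(x - v) >= delta because every average
   of the x_n lies in A.  The Hahn-Banach theorem (proved below by Zorn's lemma)
   yields a real-linear functional g <= q with g(x - v) = q(x - v); such a g is a
   real Banach limit, and its complexification s |-> g(s) - i g(i s) is a Banach limit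
   separating x from the constant sequence v.  Linear subspaces are convex. *)

section \<open>The Hahn--Banach theorem for sublinear functionals\<close>

locale sublinear =
  fixes p :: "'b::real_vector \<Rightarrow> real"
  assumes subadditive: "p (x + y) \<le> p x + p y"
    and pos_homogeneous: "c > 0 \<Longrightarrow> p (c *\<^sub>R x) = c * p x"
begin

lemma zero [simp]: "p 0 = 0"
  using pos_homogeneous[of 2 0] by simp

text \<open>Homogeneity becomes an inequality for arbitrary real scalars; this is what makes
  the restriction of p to a line through z dominate the linear functional there.\<close>

lemma scale_lower: "c * p x \<le> p (c *\<^sub>R x)"
proof -
  consider "c > 0" | "c = 0" | "c < 0" by linarith
  then show ?thesis
  proof cases
    case 3
    have "0 \<le> p (c *\<^sub>R x) + p ((- c) *\<^sub>R x)"
      using subadditive[of "c *\<^sub>R x" "(- c) *\<^sub>R x"] by (simp add: scaleR_left.minus)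
    with pos_homogeneous[of "- c" x] 3 show ?thesis by simp
  qed (simp_all add: pos_homogeneous)
qed

text \<open>Graphs of real-linear functionals on subspaces that are dominated by p and
  agree with p at z.  Closure under addition and scaling says that the domain is a
  subspace and the relation is linear; single-valuedness follows from domination.\<close>

definition dominated_graph :: "'b \<Rightarrow> ('b \<times> real) set \<Rightarrow> bool" where
  "dominated_graph z G \<longleftrightarrow>
     (\<forall>x a y b. (x, a) \<in> G \<longrightarrow> (y, b) \<in> G \<longrightarrow> (x + y, a + b) \<in> G) \<and>
     (\<forall>x a c. (x, a) \<in> G \<longrightarrow> (c *\<^sub>R x, c * a) \<in> G) \<and>
     (\<forall>x a. (x, a) \<in> G \<longrightarrow> a \<le> p x) \<and> (z, p z) \<in> G"

lemma dominated_graph_unique: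
  assumes G: "dominated_graph z G" and "(x, a) \<in> G" "(x, b) \<in> G"
  shows "a = b"
proof -
  have "(x + (-1) *\<^sub>R x, a + (-1) * b) \<in> G" "(x + (-1) *\<^sub>R x, b + (-1) * a) \<in> G"
    using G assms(2,3) unfolding dominated_graph_def by blast+
  then have "a - b \<le> p 0" "b - a \<le> p 0"
    using G unfolding dominated_graph_def by force+
  then show ?thesis by simp
qed

text \<open>The starting point of Zorn's lemma: the functional t z \<mapsto> t p(z) on the line
  through z.\<close>

lemma dominated_graph_line: "dominated_graph z {(t *\<^sub>R z, t * p z) | t. True}"
  unfolding dominated_graph_def
proof (intro conjI allI impI)
  fix x a y b
  assume "(x, a) \<in> {(t *\<^sub>R z, t * p z) | t. True}" "(y, b) \<in> {(t *\<^sub>R z, t * p z) | t. True}"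
  then obtain s t where "x = s *\<^sub>R z" "a = s * p z" "y = t *\<^sub>R z" "b = t * p z" by blast
  then show "(x + y, a + b) \<in> {(t *\<^sub>R z, t * p z) | t. True}"
    by (auto intro!: exI[of _ "s + t"] simp: scaleR_add_left distrib_right)
next
  fix x a c
  assume "(x, a) \<in> {(t *\<^sub>R z, t * p z) | t. True}"
  then obtain t where "x = t *\<^sub>R z" "a = t * p z" by blast
  then show "(c *\<^sub>R x, c * a) \<in> {(t *\<^sub>R z, t * p z) | t. True}"
    by (auto intro!: exI[of _ "c * t"])
next
  fix x a
  assume "(x, a) \<in> {(t *\<^sub>R z, t * p z) | t. True}"
  then show "a \<le> p x" using scale_lower by auto
qed (auto intro!: exI[of _ 1])

lemma dominated_graph_chain_Union:
  assumes C: "C \<in> chains {G. dominated_graph z G}" and "C \<noteq> {}"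
  shows "dominated_graph z (\<Union>C)"
proof -
  have dom: "\<And>G. G \<in> C \<Longrightarrow> dominated_graph z G"
    using C unfolding chains_def by blast
  have chain: "\<And>G H. G \<in> C \<Longrightarrow> H \<in> C \<Longrightarrow> G \<subseteq> H \<or> H \<subseteq> G"
    using C unfolding chains_def chain_subset_def by blast
  show ?thesis
    unfolding dominated_graph_def
  proof (intro conjI allI impI)
    fix x a y b
    assume "(x, a) \<in> \<Union>C" "(y, b) \<in> \<Union>C"
    then obtain G H where GH: "G \<in> C" "H \<in> C" "(x, a) \<in> G" "(y, b) \<in> H" by blast
    from chain[OF GH(1,2)] show "(x + y, a + b) \<in> \<Union>C"
    proof
      assume "G \<subseteq> H"
      then show ?thesis using GH dom[of H] unfolding dominated_graph_def by blast
    next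
      assume "H \<subseteq> G"
      then show ?thesis using GH dom[of G] unfolding dominated_graph_def by blast
    qed
  next
    fix x a c
    assume "(x, a) \<in> \<Union>C"
    then show "(c *\<^sub>R x, c * a) \<in> \<Union>C" using dom unfolding dominated_graph_def by blast
  next
    fix x a
    assume "(x, a) \<in> \<Union>C"
    then show "a \<le> p x" using dom unfolding dominated_graph_def by blast
  next
    show "(z, p z) \<in> \<Union>C" using \<open>C \<noteq> {}\<close> dom unfolding dominated_graph_def by blast
  qed
qed

lemma extension_constant:
  assumes G: "dominated_graph z G"
  shows "\<exists>c. \<forall>x a. (x, a) \<in> G \<longrightarrow> a - p (x - y) \<le> c \<and> c \<le> p (x + y) - a"
proof -
  define S where "S = {a - p (x - y) | x a. (x, a) \<in> G}"
  have below_above: "a - p (x - y) \<le> p (x' + y) - a'"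
    if "(x, a) \<in> G" "(x', a') \<in> G" for x a x' a'
  proof -
    have "a + a' \<le> p (x + x')"
      using G that unfolding dominated_graph_def by blast
    also have "\<dots> \<le> p (x - y) + p (x' + y)"
      using subadditive[of "x - y" "x' + y"] by simp
    finally show ?thesis by simp
  qed
  have "(z, p z) \<in> G" using G unfolding dominated_graph_def by blast
  then have "S \<noteq> {}" "bdd_above S"
    using below_above unfolding S_def bdd_above_def by blast+
  then have "a - p (x - y) \<le> Sup S \<and> Sup S \<le> p (x + y) - a" if "(x, a) \<in> G" for x a
    using that below_above by (auto intro!: cSup_upper cSup_least simp: S_def)
  then show ?thesis by blast
qed

text \<open>A value c as above extends the graph to the span of the graph's domain and y,
  still dominated by p: scaling by 1/|t| reduces the claim to the two bounds on c.\<close>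

lemma extension_dominated:
  assumes G: "dominated_graph z G" and xa: "(x, a) \<in> G"
    and c: "\<And>x a. (x, a) \<in> G \<Longrightarrow> a - p (x - y) \<le> c \<and> c \<le> p (x + y) - a"
  shows "a + t * c \<le> p (x + t *\<^sub>R y)"
proof -
  have scaled: "((1 / s) *\<^sub>R x, (1 / s) * a) \<in> G" for s
    using G xa unfolding dominated_graph_def by blast
  consider "t > 0" | "t = 0" | "t < 0" by linarith
  then show ?thesis
  proof cases
    case 1
    have "p (x + t *\<^sub>R y) = t * p ((1 / t) *\<^sub>R x + y)"
      using pos_homogeneous[OF 1, of "(1 / t) *\<^sub>R x + y"] 1 by (simp add: scaleR_add_right)
    with c[OF scaled[of t]] 1 show ?thesis by (simp add: field_simps)
  next
    case 2
    then show ?thesis using G xa unfolding dominated_graph_def by simp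
  next
    case 3
    have "p (x + t *\<^sub>R y) = (- t) * p ((1 / (- t)) *\<^sub>R x - y)"
      using pos_homogeneous[of "- t" "(1 / (- t)) *\<^sub>R x - y"] 3 by (simp add: scaleR_diff_right)
    with c[OF scaled[of "- t"]] 3 show ?thesis by (simp add: field_simps)
  qed
qed

lemma dominated_graph_extend:
  assumes G: "dominated_graph z G"
  shows "\<exists>G'. dominated_graph z G' \<and> G \<subseteq> G' \<and> (\<exists>b. (y, b) \<in> G')"
proof -
  obtain c where c: "\<And>x a. (x, a) \<in> G \<Longrightarrow> a - p (x - y) \<le> c \<and> c \<le> p (x + y) - a"
    using extension_constant[OF G] by blast
  define G' where "G' = {(x + t *\<^sub>R y, a + t * c) | x a t. (x, a) \<in> G}"
  have G'_intro: "(x + t *\<^sub>R y, a + t * c) \<in> G'" if "(x, a) \<in> G" for x a t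
    using that unfolding G'_def by blast
  have "dominated_graph z G'"
    unfolding dominated_graph_def
  proof (intro conjI allI impI)
    fix x a x' a'
    assume "(x, a) \<in> G'" "(x', a') \<in> G'"
    then obtain x1 a1 t1 x2 a2 t2 where h: "(x1, a1) \<in> G" "(x2, a2) \<in> G"
      "x = x1 + t1 *\<^sub>R y" "a = a1 + t1 * c" "x' = x2 + t2 *\<^sub>R y" "a' = a2 + t2 * c"
      unfolding G'_def by blast
    have "(x1 + x2, a1 + a2) \<in> G" using G h unfolding dominated_graph_def by blast
    from G'_intro[OF this, of "t1 + t2"] h show "(x + x', a + a') \<in> G'"
      by (simp add: algebra_simps)
  next
    fix x a s
    assume "(x, a) \<in> G'"
    then obtain x1 a1 t1 where h: "(x1, a1) \<in> G" "x = x1 + t1 *\<^sub>R y" "a = a1 + t1 * c"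
      unfolding G'_def by blast
    have "(s *\<^sub>R x1, s * a1) \<in> G" using G h unfolding dominated_graph_def by blast
    from G'_intro[OF this, of "s * t1"] h show "(s *\<^sub>R x, s * a) \<in> G'"
      by (simp add: algebra_simps)
  next
    fix x a
    assume "(x, a) \<in> G'"
    then show "a \<le> p x"
      using extension_dominated[OF G _ c] unfolding G'_def by blast
  next
    show "(z, p z) \<in> G'"
      using G'_intro[of z "p z" 0] G unfolding dominated_graph_def by simp
  qed
  moreover have "G \<subseteq> G'"
    using G'_intro[of _ _ 0] by auto
  moreover have "(0, 0) \<in> G"
    using G unfolding dominated_graph_def by (metis mult_zero_left scaleR_zero_left)
  then have "(y, c) \<in> G'"
    using G'_intro[of 0 0 1] by simp
  ultimately show ?thesis by blast
qed

text \<open>By Zorn's lemma there is a maximal dominated graph; by the extension step its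
  domain is the whole space.\<close>

lemma total_dominated_graph: "\<exists>G. dominated_graph z G \<and> (\<forall>y. \<exists>b. (y, b) \<in> G)"
proof -
  have "\<exists>M\<in>{G. dominated_graph z G}. \<forall>X\<in>{G. dominated_graph z G}. M \<subseteq> X \<longrightarrow> X = M"
  proof (rule Zorn_Lemma2, intro ballI)
    fix C
    assume C: "C \<in> chains {G. dominated_graph z G}"
    show "\<exists>U\<in>{G. dominated_graph z G}. \<forall>X\<in>C. X \<subseteq> U"
    proof (cases "C = {}")
      case True
      then show ?thesis using dominated_graph_line by blast
    next
      case False
      then show ?thesis using dominated_graph_chain_Union[OF C] by blast
    qed
  qed
  then obtain M where M: "dominated_graph z M"
    and maximal: "\<And>X. dominated_graph z X \<Longrightarrow> M \<subseteq> X \<Longrightarrow> X = M"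
    by blast
  have "\<exists>b. (y, b) \<in> M" for y
    using dominated_graph_extend[OF M, of y] maximal by blast
  with M show ?thesis by blast
qed

theorem hahn_banach: "\<exists>f. linear f \<and> (\<forall>x. f x \<le> p x) \<and> f z = p z"
proof -
  obtain G where G: "dominated_graph z G" and total: "\<And>y. \<exists>b. (y, b) \<in> G"
    using total_dominated_graph by blast
  define f where "f x = (SOME a. (x, a) \<in> G)" for x
  have graph: "(x, f x) \<in> G" for x
    unfolding f_def using total by (metis someI_ex)
  have graph_value: "(x, a) \<in> G \<Longrightarrow> f x = a" for x a
    using dominated_graph_unique[OF G] graph by blast
  have "f (x + y) = f x + f y" for x y
    using graph[of x] graph[of y] G graph_value unfolding dominated_graph_def by blast
  moreover have "f (c *\<^sub>R x) = c * f x" for c x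
    using graph[of x] G graph_value unfolding dominated_graph_def by blast
  ultimately have "linear f"
    by (simp add: linear_iff)
  moreover have "f x \<le> p x" for x
    using graph G unfolding dominated_graph_def by blast
  moreover have "f z = p z"
    using graph_value G unfolding dominated_graph_def by blast
  ultimately show ?thesis by blast
qed

end

section \<open>A sublinear functional on bounded sequences\<close>

text \<open>For a bounded sequence y, viewed as an element of the normed space of bounded
  continuous functions on nat, window_sup N y is the supremum over all windows of length N
  of the norm of the window sum, and mean_sup y is the infimum of the averaged window
  suprema.  It will dominate a real Banach limit.\<close>

definition window_sup :: "nat \<Rightarrow> (nat \<Rightarrow>\<^sub>C 'a::real_normed_vector) \<Rightarrow> real" where
  "window_sup N y = (SUP k. norm (\<Sum>j<N. apply_bcontfun y (k + j)))"

definition mean_sup :: "(nat \<Rightarrow>\<^sub>C 'a::real_normed_vector) \<Rightarrow> real" where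
  "mean_sup y = (INF n. window_sup (Suc n) y / real (Suc n))"

lemma window_sum_bound: "norm (\<Sum>j<N. apply_bcontfun y (k + j)) \<le> real N * norm y"
proof -
  have "norm (\<Sum>j<N. apply_bcontfun y (k + j)) \<le> (\<Sum>j<N. norm (apply_bcontfun y (k + j)))"
    by (rule norm_sum)
  also have "\<dots> \<le> (\<Sum>j<N. norm y)"
    by (rule sum_mono) (rule norm_bounded)
  finally show ?thesis by simp
qed

lemma window_sup_upper: "norm (\<Sum>j<N. apply_bcontfun y (k + j)) \<le> window_sup N y"
  unfolding window_sup_def
  by (rule cSUP_upper) (auto intro!: bdd_aboveI2 window_sum_bound)

lemma window_sup_least:
  "(\<And>k. norm (\<Sum>j<N. apply_bcontfun y (k + j)) \<le> b) \<Longrightarrow> window_sup N y \<le> b"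
  unfolding window_sup_def by (rule cSUP_least) auto

lemma window_sup_nonneg: "0 \<le> window_sup N y"
  using window_sup_upper[where N=N and y=y and k=0] norm_ge_zero order_trans by blast

lemma window_sup_add: "window_sup N (y + z) \<le> window_sup N y + window_sup N z"
proof (rule window_sup_least)
  fix k
  have "norm (\<Sum>j<N. apply_bcontfun (y + z) (k + j)) =
        norm ((\<Sum>j<N. apply_bcontfun y (k + j)) + (\<Sum>j<N. apply_bcontfun z (k + j)))"
    by (simp add: sum.distrib)
  also have "\<dots> \<le> window_sup N y + window_sup N z"
    by (intro norm_triangle_le add_mono window_sup_upper)
  finally show "norm (\<Sum>j<N. apply_bcontfun (y + z) (k + j)) \<le> window_sup N y + window_sup N z" .
qed

lemma window_sup_scale: "c \<ge> 0 \<Longrightarrow> window_sup N (c *\<^sub>R y) \<le> c * window_sup N y"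
  by (rule window_sup_least)
    (simp add: scaleR_sum_right[symmetric] mult_left_mono window_sup_upper)

text \<open>A window of length M N splits into M windows of length N; this gives the
  submultiplicativity behind the subadditivity of mean_sup.\<close>

lemma window_sup_blocks: "window_sup (M * N) y \<le> real M * window_sup N y"
proof (rule window_sup_least)
  fix k
  have block: "(\<Sum>j\<in>{i * N..<i * N + N}. apply_bcontfun y (k + j)) =
      (\<Sum>j<N. apply_bcontfun y (k + i * N + j))" for i
    by (simp add: sum.atLeastLessThan_shift_0[of _ "i * N"] atLeast0LessThan add.assoc)
  have "(\<Sum>j<M * N. apply_bcontfun y (k + j)) = (\<Sum>i<M. \<Sum>j<N. apply_bcontfun y (k + i * N + j))"
    using sum.nat_group[of "\<lambda>j. apply_bcontfun y (k + j)" N M] by (simp add: block)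
  also have "norm \<dots> \<le> (\<Sum>i<M. norm (\<Sum>j<N. apply_bcontfun y (k + i * N + j)))"
    by (rule norm_sum)
  also have "\<dots> \<le> (\<Sum>i<M. window_sup N y)"
    by (intro sum_mono window_sup_upper)
  finally show "norm (\<Sum>j<M * N. apply_bcontfun y (k + j)) \<le> real M * window_sup N y"
    by simp
qed

lemma mean_sup_lower: "mean_sup y \<le> window_sup (Suc n) y / real (Suc n)"
  unfolding mean_sup_def
  by (rule cINF_lower) (auto intro!: bdd_belowI2[of _ 0] simp: window_sup_nonneg)

lemma mean_sup_greatest: "(\<And>n. c \<le> window_sup (Suc n) y / real (Suc n)) \<Longrightarrow> c \<le> mean_sup y"
  unfolding mean_sup_def by (rule cINF_greatest) auto

lemma mean_sup_le_norm: "mean_sup y \<le> (SUP k. norm (apply_bcontfun y k))"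
  using mean_sup_lower[of y 0] by (simp add: window_sup_def)

lemma mean_sup_subadditive: "mean_sup (y + z) \<le> mean_sup y + mean_sup z"
proof -
  have "mean_sup (y + z) - window_sup (Suc n) z / real (Suc n) \<le> mean_sup y" for n
  proof (rule mean_sup_greatest)
    fix m
    let ?N = "Suc m * Suc n"
    have "mean_sup (y + z) \<le> window_sup ?N (y + z) / real ?N"
      using mean_sup_lower[of "y + z" "m * Suc n + n"] by (simp only: mult_Suc add_Suc add.commute)
    also have "\<dots> \<le> (window_sup ?N y + window_sup ?N z) / real ?N"
      by (rule divide_right_mono[OF window_sup_add]) simp
    also have "window_sup ?N y \<le> real (Suc n) * window_sup (Suc m) y"
      using window_sup_blocks[of "Suc n" "Suc m" y] by (simp add: mult.commute)
    also have "window_sup ?N z \<le> real (Suc m) * window_sup (Suc n) z"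
      by (rule window_sup_blocks)
    also have "(real (Suc n) * window_sup (Suc m) y + real (Suc m) * window_sup (Suc n) z) / real ?N =
        window_sup (Suc m) y / real (Suc m) + window_sup (Suc n) z / real (Suc n)"
      by (simp add: field_simps)
    finally show "mean_sup (y + z) - window_sup (Suc n) z / real (Suc n)
        \<le> window_sup (Suc m) y / real (Suc m)"
      by (simp add: divide_right_mono)
  qed
  then have "mean_sup (y + z) - mean_sup y \<le> mean_sup z"
    by (intro mean_sup_greatest) (simp add: algebra_simps)
  then show ?thesis by simp
qed

lemma mean_sup_scale_le: "c > 0 \<Longrightarrow> mean_sup (c *\<^sub>R y) \<le> c * mean_sup y"
proof -
  assume c: "c > 0"
  have "mean_sup (c *\<^sub>R y) / c \<le> mean_sup y"
  proof (rule mean_sup_greatest)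
    fix n
    have "mean_sup (c *\<^sub>R y) \<le> window_sup (Suc n) (c *\<^sub>R y) / real (Suc n)"
      by (rule mean_sup_lower)
    also have "\<dots> \<le> c * window_sup (Suc n) y / real (Suc n)"
      using window_sup_scale[of c "Suc n" y] c by (simp add: divide_right_mono)
    finally show "mean_sup (c *\<^sub>R y) / c \<le> window_sup (Suc n) y / real (Suc n)"
      using c by (simp add: field_simps)
  qed
  then show ?thesis using c by (simp add: field_simps)
qed

lemma sublinear_mean_sup: "sublinear mean_sup"
proof
  show "mean_sup (y + z) \<le> mean_sup y + mean_sup z" for y z :: "nat \<Rightarrow>\<^sub>C 'a"
    by (rule mean_sup_subadditive)
next
  fix c :: real and y :: "nat \<Rightarrow>\<^sub>C 'a"
  assume c: "c > 0"
  have "mean_sup y = mean_sup (inverse c *\<^sub>R (c *\<^sub>R y))"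
    using c by simp
  also have "\<dots> \<le> inverse c * mean_sup (c *\<^sub>R y)"
    using c by (intro mean_sup_scale_le) simp
  finally have "c * mean_sup y \<le> mean_sup (c *\<^sub>R y)"
    using c by (simp add: field_simps)
  with mean_sup_scale_le[OF c, of y] show "mean_sup (c *\<^sub>R y) = c * mean_sup y"
    by simp
qed

text \<open>mean_sup vanishes asymptotically on telescoping sequences h(k+1) - h(k) with h
  bounded: every window sum is bounded by 2b.  This is the source of shift invariance.\<close>

lemma mean_sup_telescoping:
  assumes diff: "\<And>k. apply_bcontfun w k = h (Suc k) - h k" and bound: "\<And>k. norm (h k) \<le> b"
  shows "mean_sup w \<le> 0"
proof (rule ccontr)
  assume "\<not> mean_sup w \<le> 0"
  then have pos: "mean_sup w > 0" by simp
  obtain n where n: "2 * b / mean_sup w < real n"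
    using reals_Archimedean2 by blast
  have "window_sup (Suc n) w \<le> 2 * b"
  proof (rule window_sup_least)
    fix k
    have "(\<Sum>j<Suc n. apply_bcontfun w (k + j)) = h (k + Suc n) - h k"
      using sum_lessThan_telescope[of "\<lambda>j. h (k + j)" "Suc n"] by (simp add: diff)
    then have "norm (\<Sum>j<Suc n. apply_bcontfun w (k + j)) \<le> norm (h (k + Suc n)) + norm (h k)"
      by (simp add: norm_triangle_ineq4)
    also have "\<dots> \<le> 2 * b"
      using bound[of "k + Suc n"] bound[of k] by simp
    finally show "norm (\<Sum>j<Suc n. apply_bcontfun w (k + j)) \<le> 2 * b" .
  qed
  then have "mean_sup w * real (Suc n) \<le> 2 * b"
    using mean_sup_lower[of w n] by (simp add: field_simps)
  moreover have "2 * b < mean_sup w * real n"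
    using n pos by (simp add: field_simps)
  ultimately show False
    using pos by (simp add: algebra_simps)
qed

lemma linf_iff: "linf s \<longleftrightarrow> (\<exists>b. \<forall>n. norm (s n) \<le> b)"
  unfolding linf_def bounded_iff by auto

lemma linf_add: "linf s \<Longrightarrow> linf t \<Longrightarrow> linf (\<lambda>n. s n + t n)"
  unfolding linf_iff by (meson add_mono norm_triangle_le)

lemma linf_scaleR: "linf s \<Longrightarrow> linf (\<lambda>n. c *\<^sub>R s n)"
  unfolding linf_iff by (metis mult_left_mono norm_scaleR abs_ge_zero)

lemma linf_scaleC:
  fixes s :: "nat \<Rightarrow> 'a::complex_normed_vector"
  shows "linf s \<Longrightarrow> linf (\<lambda>n. c *\<^sub>C s n)"
  unfolding linf_iff by (metis mult_left_mono norm_scaleC norm_ge_zero)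

lemma linf_shift: "linf s \<Longrightarrow> linf (\<lambda>n. s (n + k))"
  unfolding linf_iff by blast

lemma linf_const: "linf (\<lambda>n. v)"
  unfolding linf_iff by blast

lemma linf_convergent: "convergent s \<Longrightarrow> linf s"
  unfolding linf_def using convergent_imp_Bseq Bseq_eq_bounded by blast

lemma linf_norm_upper: "linf s \<Longrightarrow> norm (s k) \<le> linf_norm s"
  unfolding linf_norm_def linf_iff by (rule cSUP_upper) (auto intro: bdd_aboveI2)

text \<open>Bounded sequences are exactly the bounded continuous functions on nat, so they
  can be transported to the normed space of such functions, where mean_sup lives.\<close>

lemma apply_Bcontfun_linf: "linf s \<Longrightarrow> apply_bcontfun (Bcontfun s) = s"
  unfolding linf_def by (simp add: Bcontfun_inverse bcontfun_def)

lemma Bcontfun_add: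
  "linf s \<Longrightarrow> linf t \<Longrightarrow> Bcontfun (\<lambda>n. s n + t n) = Bcontfun s + Bcontfun t"
  by (rule bcontfun_eqI) (simp add: apply_Bcontfun_linf linf_add)

lemma Bcontfun_scaleR: "linf s \<Longrightarrow> Bcontfun (\<lambda>n. r *\<^sub>R s n) = r *\<^sub>R Bcontfun s"
  by (rule bcontfun_eqI) (simp add: apply_Bcontfun_linf linf_scaleR)

section \<open>Real Banach limits and their complexification\<close>

definition real_banach_limit :: "((nat \<Rightarrow> 'a::real_normed_vector) \<Rightarrow> real) \<Rightarrow> bool" where
  "real_banach_limit g \<longleftrightarrow>
     (\<forall>s t. linf s \<longrightarrow> linf t \<longrightarrow> g (\<lambda>n. s n + t n) = g s + g t) \<and>
     (\<forall>r s. linf s \<longrightarrow> g (\<lambda>n. r *\<^sub>R s n) = r * g s) \<and>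
     (\<forall>s. linf s \<longrightarrow> g s \<le> linf_norm s) \<and>
     (\<forall>s. linf s \<longrightarrow> g (\<lambda>n. s (Suc n)) = g s)"

lemma real_banach_limit_add:
  "real_banach_limit g \<Longrightarrow> linf s \<Longrightarrow> linf t \<Longrightarrow> g (\<lambda>n. s n + t n) = g s + g t"
  unfolding real_banach_limit_def by blast

lemma real_banach_limit_scaleR: "real_banach_limit g \<Longrightarrow> linf s \<Longrightarrow> g (\<lambda>n. r *\<^sub>R s n) = r * g s"
  unfolding real_banach_limit_def by blast

lemma real_banach_limit_bound: "real_banach_limit g \<Longrightarrow> linf s \<Longrightarrow> g s \<le> linf_norm s"
  unfolding real_banach_limit_def by blast

lemma real_banach_limit_shift: "real_banach_limit g \<Longrightarrow> linf s \<Longrightarrow> g (\<lambda>n. s (Suc n)) = g s"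
  unfolding real_banach_limit_def by blast

definition complexify :: "((nat \<Rightarrow> 'a::complex_normed_vector) \<Rightarrow> real) \<Rightarrow> (nat \<Rightarrow> 'a) \<Rightarrow> complex"
  where "complexify g s = (if linf s then Complex (g s) (- g (\<lambda>n. \<i> *\<^sub>C s n)) else 0)"

lemma Re_complexify: "linf s \<Longrightarrow> Re (complexify g s) = g s"
  by (simp add: complexify_def)

text \<open>Complex scalars act through their real and imaginary parts; this reduces complex
  homogeneity to real linearity.\<close>

lemma scaleC_Re_Im: "c *\<^sub>C w = Re c *\<^sub>R w + Im c *\<^sub>R (\<i> *\<^sub>C w)"
proof -
  have "Re c *\<^sub>R w + Im c *\<^sub>R (\<i> *\<^sub>C w) = (complex_of_real (Re c) + complex_of_real (Im c) * \<i>) *\<^sub>C w"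
    by (simp add: scaleR_scaleC scaleC_scaleC scaleC_add_left)
  also have "complex_of_real (Re c) + complex_of_real (Im c) * \<i> = c"
    by (simp add: complex_eq_iff)
  finally show ?thesis by simp
qed

lemma scaleC_minus_one: "(- 1) *\<^sub>C w = - w"
  using scaleR_scaleC[of "- 1" w] by simp

text \<open>Complex homogeneity of the complexification: writing c = a + b i, it reduces to
  real linearity of g applied to s and to i s.\<close>

lemma complexify_scaleC:
  assumes g: "real_banach_limit g" and s: "linf s"
  shows "complexify g (\<lambda>n. c *\<^sub>C s n) = c * complexify g s"
proof -
  have add: "g (\<lambda>n. a *\<^sub>R u n + b *\<^sub>R v n) = a * g u + b * g v" if "linf u" "linf v" for u v a b
    using real_banach_limit_add[OF g linf_scaleR[OF that(1)] linf_scaleR[OF that(2)]]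
      real_banach_limit_scaleR[OF g] that by simp
  have i_s: "linf (\<lambda>n. \<i> *\<^sub>C s n)" and neg_s: "linf (\<lambda>n. - s n)"
    using linf_scaleC[OF s] linf_scaleR[OF s, of "-1"] by simp_all
  have "g (\<lambda>n. c *\<^sub>C s n) = g (\<lambda>n. Re c *\<^sub>R s n + Im c *\<^sub>R (\<i> *\<^sub>C s n))"
    by (simp only: scaleC_Re_Im[of c])
  then have re: "g (\<lambda>n. c *\<^sub>C s n) = Re c * g s + Im c * g (\<lambda>n. \<i> *\<^sub>C s n)"
    using add[OF s i_s] by simp
  have "\<i> *\<^sub>C (c *\<^sub>C w) = Re c *\<^sub>R (\<i> *\<^sub>C w) + Im c *\<^sub>R (- w)" for w :: 'a
    using scaleC_Re_Im[of c "\<i> *\<^sub>C w"]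
    by (simp add: scaleC_scaleC mult.commute scaleC_minus_one)
  then have "g (\<lambda>n. \<i> *\<^sub>C (c *\<^sub>C s n)) = Re c * g (\<lambda>n. \<i> *\<^sub>C s n) + Im c * g (\<lambda>n. - s n)"
    using add[OF i_s neg_s] by simp
  moreover have "g (\<lambda>n. - s n) = - g s"
    using add[OF s s, of "-1" 0] by simp
  ultimately have im: "g (\<lambda>n. \<i> *\<^sub>C (c *\<^sub>C s n)) = Re c * g (\<lambda>n. \<i> *\<^sub>C s n) - Im c * g s"
    by simp
  show ?thesis
    using s linf_scaleC[OF s, of c] re im
    by (simp add: complexify_def complex_eq_iff algebra_simps)
qed

text \<open>Norm bound of the complexification: rotate s by the phase of L(s) so that the
  value becomes real, where the real bound applies.\<close>

lemma complexify_norm_bound: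
  assumes g: "real_banach_limit g" and s: "linf s"
  shows "cmod (complexify g s) \<le> linf_norm s"
proof (cases "complexify g s = 0")
  case True
  then show ?thesis
    using linf_norm_upper[OF s, of 0] norm_ge_zero[of "s 0"] by (simp del: norm_ge_zero)
next
  case False
  define u where "u = cnj (complexify g s) / complex_of_real (cmod (complexify g s))"
  have u: "cmod u = 1"
    using False by (simp add: u_def norm_divide)
  have "u * complexify g s = complex_of_real (cmod (complexify g s))"
    using False by (simp add: u_def complex_norm_square[symmetric] power2_eq_square mult.commute)
  then have "cmod (complexify g s) = Re (complexify g (\<lambda>n. u *\<^sub>C s n))"
    by (simp add: complexify_scaleC[OF g s])
  also have "\<dots> = g (\<lambda>n. u *\<^sub>C s n)"
    using Re_complexify[OF linf_scaleC[OF s]] .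
  also have "\<dots> \<le> linf_norm (\<lambda>n. u *\<^sub>C s n)"
    by (rule real_banach_limit_bound[OF g linf_scaleC[OF s]])
  also have "\<dots> = linf_norm s"
    by (simp add: linf_norm_def norm_scaleC u)
  finally show ?thesis .
qed

lemma banach_limit_complexify:
  assumes g: "real_banach_limit g"
  shows "banach_limit (complexify g)"
proof -
  note add = real_banach_limit_add[OF g] and shift = real_banach_limit_shift[OF g]
  have "complexify g (\<lambda>n. s n + t n) = complexify g s + complexify g t"
    if "linf s" "linf t" for s t
    using that add add[OF linf_scaleC[OF that(1)] linf_scaleC[OF that(2)], of \<i> \<i>] linf_add[OF that]
    by (simp add: complexify_def scaleC_add_right complex_eq_iff)
  moreover have "complexify g (\<lambda>n. s (Suc n)) = complexify g s" if "linf s" for s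
    using that linf_shift[OF that, of 1] shift shift[OF linf_scaleC[OF that, of \<i>]]
    by (simp add: complexify_def complex_eq_iff)
  ultimately show ?thesis
    unfolding banach_limit_def
    using complexify_scaleC[OF g] complexify_norm_bound[OF g] by blast
qed

section \<open>Banach limits separating a closed convex set from a point\<close>

text \<open>Hahn--Banach applied to mean_sup: for every bounded sequence w there is a real
  Banach limit attaining the value mean_sup at w.  Shift invariance comes from
  mean_sup vanishing on the telescoping sequences s(n+1) - s(n) and s(n) - s(n+1).\<close>

lemma real_banach_limit_exists:
  fixes w :: "nat \<Rightarrow> 'a::real_normed_vector"
  assumes w: "linf w"
  shows "\<exists>g. real_banach_limit g \<and> g w = mean_sup (Bcontfun w)"
proof -
  obtain f where f: "linear f" and f_le: "\<And>y. f y \<le> mean_sup y"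
    and f_w: "f (Bcontfun w) = mean_sup (Bcontfun w)"
    using sublinear.hahn_banach[OF sublinear_mean_sup] by blast
  define g where "g s = f (Bcontfun s)" for s :: "nat \<Rightarrow> 'a"
  have "g (\<lambda>n. s (Suc n)) = g s" if s: "linf s" for s
  proof -
    have s': "linf (\<lambda>n. s (Suc n))"
      using linf_shift[OF s, of 1] by simp
    obtain b where b: "\<And>n. norm (s n) \<le> b"
      using s linf_iff by blast
    have "mean_sup (Bcontfun (\<lambda>n. s (Suc n)) - Bcontfun s) \<le> 0"
      by (rule mean_sup_telescoping[where h = s and b = b]) (simp_all add: apply_Bcontfun_linf s s' b)
    moreover have "mean_sup (Bcontfun s - Bcontfun (\<lambda>n. s (Suc n))) \<le> 0"
      by (rule mean_sup_telescoping[where h = "\<lambda>n. - s n" and b = b])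
        (simp_all add: apply_Bcontfun_linf s s' b)
    ultimately show ?thesis
      using f_le[of "Bcontfun (\<lambda>n. s (Suc n)) - Bcontfun s"]
        f_le[of "Bcontfun s - Bcontfun (\<lambda>n. s (Suc n))"]
      by (simp add: g_def linear_diff[OF f])
  qed
  moreover have "g s \<le> linf_norm s" if "linf s" for s
    using f_le[of "Bcontfun s"] mean_sup_le_norm[of "Bcontfun s"] that
    by (simp add: g_def apply_Bcontfun_linf linf_norm_def)
  ultimately have "real_banach_limit g"
    unfolding real_banach_limit_def
    by (simp add: g_def Bcontfun_add Bcontfun_scaleR linear_add[OF f] linear_scale[OF f])
  with f_w show ?thesis
    unfolding g_def by blast
qed

text \<open>If a bounded sequence x stays in a convex set missing the ball of radius delta
  about v, then mean_sup(x - v) is at least delta: each window average of x lies in A.\<close>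

lemma mean_sup_convex_distance:
  fixes x :: "nat \<Rightarrow> 'a::real_normed_vector"
  assumes A: "convex A" and x: "\<And>n. x n \<in> A" "linf x" and ball: "ball v \<delta> \<subseteq> - A"
  shows "\<delta> \<le> mean_sup (Bcontfun (\<lambda>n. x n - v))"
proof (rule mean_sup_greatest)
  fix n
  let ?N = "Suc n"
  define avg where "avg = (\<Sum>j<?N. (1 / real ?N) *\<^sub>R x j)"
  have "avg \<in> A"
    unfolding avg_def by (rule convex_sum[OF _ A]) (auto simp: x)
  then have "avg \<notin> ball v \<delta>"
    using ball by blast
  then have "\<delta> \<le> norm (avg - v)"
    by (simp add: dist_norm norm_minus_commute)
  have linf_diff: "linf (\<lambda>n. x n - v)"
    using linf_add[OF x(2) linf_const[of "- v"]] by simp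
  have "(\<Sum>j<?N. apply_bcontfun (Bcontfun (\<lambda>n. x n - v)) (0 + j)) = real ?N *\<^sub>R (avg - v)"
    by (simp add: apply_Bcontfun_linf[OF linf_diff] avg_def sum_subtractf scaleR_diff_right
        scaleR_sum_right[symmetric] sum_constant_scaleR scaleR_add_left)
  then have "real ?N * norm (avg - v) \<le> window_sup ?N (Bcontfun (\<lambda>n. x n - v))"
    using window_sup_upper[where k = 0 and N = ?N and y = "Bcontfun (\<lambda>n. x n - v)"] by simp
  moreover have "real ?N * \<delta> \<le> real ?N * norm (avg - v)"
    using \<open>\<delta> \<le> norm (avg - v)\<close> by (rule mult_left_mono) simp
  ultimately have "real ?N * \<delta> \<le> window_sup ?N (Bcontfun (\<lambda>n. x n - v))"
    by linarith
  then show "\<delta> \<le> window_sup ?N (Bcontfun (\<lambda>n. x n - v)) / real ?N"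
    by (simp add: pos_le_divide_eq mult.commute)
qed

text \<open>The real parts of the complexified
  Banach limit differ by at least delta.\<close>

lemma banach_limit_separates:
  fixes A :: "'a::complex_normed_vector set"
  assumes A: "convex A" "closed A" and x: "\<And>n. x n \<in> A" "linf x" and v: "v \<notin> A"
  shows "\<exists>L. banach_limit L \<and> L x \<noteq> L (\<lambda>n. v)"
proof -
  obtain \<delta> where "\<delta> > 0" and ball: "ball v \<delta> \<subseteq> - A"
    using A(2) v open_contains_ball[of "- A"] by auto
  have diff: "linf (\<lambda>n. x n - v)"
    using linf_add[OF x(2) linf_const[of "- v"]] by simp
  obtain g where g: "real_banach_limit g" and g_diff: "g (\<lambda>n. x n - v) = mean_sup (Bcontfun (\<lambda>n. x n - v))"
    using real_banach_limit_exists[OF diff] by blast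
  have "g (\<lambda>n. (x n - v) + v) = g (\<lambda>n. x n - v) + g (\<lambda>n. v)"
    by (rule real_banach_limit_add[OF g diff linf_const])
  then have "g x = g (\<lambda>n. x n - v) + g (\<lambda>n. v)"
    by simp
  moreover have "g (\<lambda>n. x n - v) \<ge> \<delta>"
    using g_diff mean_sup_convex_distance[OF A(1) x ball] by simp
  ultimately have "Re (complexify g x) \<noteq> Re (complexify g (\<lambda>n. v))"
    using \<open>\<delta> > 0\<close> x(2) linf_const[of v] by (simp add: Re_complexify)
  then show ?thesis
    using banach_limit_complexify[OF g] by auto
qed

section \<open>Banach limits and norm convergence\<close>

lemma banach_limit_shift:
  assumes L: "banach_limit L" and s: "linf s"
  shows "L (\<lambda>n. s (n + k)) = L s"
proof (induction k)
  case (Suc k)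
  have "L (\<lambda>n. s (Suc n + k)) = L (\<lambda>n. s (n + k))"
    using L linf_shift[OF s, of k] unfolding banach_limit_def by blast
  then show ?case using Suc by simp
qed simp

text \<open>Banach limits vanish on null sequences: after a shift, the sup norm is arbitrarily
  small.\<close>

lemma banach_limit_null:
  assumes L: "banach_limit L" and lim: "s \<longlonglongrightarrow> 0"
  shows "L s = 0"
proof (rule ccontr)
  assume "L s \<noteq> 0"
  define e where "e = cmod (L s) / 2"
  have e: "e > 0"
    using \<open>L s \<noteq> 0\<close> by (simp add: e_def)
  then obtain N where N: "\<And>n. n \<ge> N \<Longrightarrow> norm (s n) < e"
    using lim unfolding LIMSEQ_iff by (metis diff_zero)
  have s: "linf s"
    using lim by (intro linf_convergent) (auto simp: convergent_def)
  have "cmod (L s) = cmod (L (\<lambda>n. s (n + N)))"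
    using banach_limit_shift[OF L s] by simp
  also have "\<dots> \<le> linf_norm (\<lambda>n. s (n + N))"
    using L linf_shift[OF s] unfolding banach_limit_def by blast
  also have "\<dots> \<le> e"
    unfolding linf_norm_def using N by (intro cSUP_least) (auto intro: less_imp_le)
  finally show False using e by (simp add: e_def)
qed

text \<open>Norm convergence implies strong almost convergence, since x - l is a null sequence.\<close>

lemma convergent_imp_strongly_almost_convergent:
  fixes x :: "nat \<Rightarrow> 'a::complex_normed_vector"
  assumes lim: "x \<longlonglongrightarrow> l"
  shows "strongly_almost_convergent x l"
  unfolding strongly_almost_convergent_def
proof (intro conjI allI impI)
  show x: "linf x"
    using lim by (intro linf_convergent) (auto simp: convergent_def)
  fix L :: "(nat \<Rightarrow> 'a) \<Rightarrow> complex"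
  assume L: "banach_limit L"
  have "(\<lambda>n. x n + (- 1) *\<^sub>C l) \<longlonglongrightarrow> 0"
    using lim by (simp add: scaleC_minus_one LIM_zero)
  then have "0 = L (\<lambda>n. x n + (- 1) *\<^sub>C l)"
    using banach_limit_null[OF L] by simp
  also have "\<dots> = L x - L (\<lambda>n. l)"
    using L x linf_const[of l] linf_const[of "(- 1) *\<^sub>C l"] unfolding banach_limit_def by simp
  finally show "L x = L (\<lambda>n. l)" by simp
qed

lemma closed_iff_sa_seq_closed:
  fixes A :: "'a::complex_normed_vector set"
  assumes "convex A"
  shows "closed A \<longleftrightarrow> sa_seq_closed A"
proof
  assume "closed A"
  then show "sa_seq_closed A"
    unfolding sa_seq_closed_def strongly_almost_convergent_def
    using banach_limit_separates[OF \<open>convex A\<close>] by blast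
next
  assume "sa_seq_closed A"
  then show "closed A"
    unfolding closed_sequential_limits sa_seq_closed_def
    using convergent_imp_strongly_almost_convergent strongly_almost_convergent_def by blast
qed

text \<open>Complex linear subspaces are convex, since real scalars are complex scalars.\<close>

lemma csubspace_convex: "csubspace S \<Longrightarrow> convex S"
  unfolding csubspace_def convex_def scaleR_scaleC by blast

theorem mainTheorem16:
  fixes A :: "'a::complex_normed_vector set"
  assumes "convex A"
  shows "(closed A \<longleftrightarrow> sa_seq_closed A) \<and>
         (\<forall>S :: 'a set. csubspace S \<longrightarrow> (closed S \<longleftrightarrow> sa_seq_closed S))"
  using closed_iff_sa_seq_closed[OF assms] closed_iff_sa_seq_closed[OF csubspace_convex] by blast

end
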